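(* For the complete binary tree with uniform prior $\pi$ on $\mathcal{P}_m$ and Gaussian mean shift $\mu_m$, the likelihood ratio $L_m=2^{-(m-1)}\sum_{p\in\mathcal{P}_m}e^{\mu_mX_p-m\mu_m^2/2}$ (with $X_p=\sum_{v\in p}X_v$) satisfies, with $\tau_m=e^{\mu_m^2}/2$ and $\tau_m\neq1$, $\mathrm{Var}_0(L_m)=\frac{(2\tau_m-1)(1-\tau_m^m)}{1-\tau_m}$; in particular $\mathrm{Var}_0(L_m)\to0$ whenever $\mu_m\to0$.
   Context: Binary tree: $V_m=\{(i,j):0\le i\le m-1,\ 0\le j<2^i\}$ with oriented edges $(i,j)\to(i+1,2j+s)$, $s\in\{0,1\}$; $\mathcal{P}_m$ is the set of $2^{m-1}$ directed paths from the root visiting $m$ vertices. $\mathrm{Var}_0$ is the variance under $H_0$, where the $X_v$ are i.i.d. $N(0,1)$. *)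

theory Defs
  imports "HOL-Probability.Probability"
begin

text \<open>Vertices of the infinite complete binary tree: level i, position j < 2^i.\<close>
definition tree_V_all :: "(nat \<times> nat) set" where
  "tree_V_all = {(i, j). j < 2 ^ i}"

definition tree_V :: "nat \<Rightarrow> (nat \<times> nat) set" where
  "tree_V m = {(i, j). i \<le> m - 1 \<and> j < 2 ^ i \<and> 0 < m}"

text \<open>P_m: directed paths from the root visiting m vertices, as vertex lists.\<close>
definition tree_paths :: "nat \<Rightarrow> (nat \<times> nat) list set" where
  "tree_paths m = {p. length p = m \<and> p \<noteq> [] \<and> hd p = (0, 0) \<and>
     (\<forall>k. k + 1 < m \<longrightarrow>
        (\<exists>s\<in>{0, 1}. p ! (k + 1) = (fst (p ! k) + 1, 2 * snd (p ! k) + s)))}"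

definition path_sum :: "(nat \<times> nat \<Rightarrow> 'a \<Rightarrow> real) \<Rightarrow> (nat \<times> nat) list \<Rightarrow> 'a \<Rightarrow> real" where
  "path_sum X p \<omega> = (\<Sum>v\<in>set p. X v \<omega>)"

definition LR :: "real \<Rightarrow> nat \<Rightarrow> (nat \<times> nat \<Rightarrow> 'a \<Rightarrow> real) \<Rightarrow> 'a \<Rightarrow> real" where
  "LR \<mu> m X \<omega> = (1 / 2 ^ (m - 1)) *
     (\<Sum>p\<in>tree_paths m. exp (\<mu> * path_sum X p \<omega> - real m * \<mu>\<^sup>2 / 2))"

end

theory Submission
  imports Defs
begin

text \<open>
  Write L_m = 2^-(m-1) * sum_p W_p with W_p = exp (mu X_p - m mu^2/2) and put a = exp mu^2.
  By independence and the Gaussian moment generating function, E W_p = 1 and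
  E (W_p W_q) = a^|p \<inter> q|, because the vertices shared by p and q enter X_p + X_q twice.
  Appending a last step to two paths adds a common vertex exactly when the paths and the
  steps agree, since a path is determined by its endpoint. Hence the overlap sums
  S_m = sum_p,q a^|p \<inter> q| satisfy S_(m+1) / 4^m = S_m / 4^(m-1) + (a - 1) (a/2)^m, so
  E L_m^2 = 1 + (a - 1) sum_(k<m) (a/2)^k and Var L_m = (2 tau - 1) sum_(k<m) tau^k.
  Once tau < 1 this is at most |2 tau - 1| / (1 - tau), which tends to 0 as mu tends to 0.
\<close>

section \<open>Paths in the binary tree\<close>

definition tree_child :: "nat \<times> nat \<Rightarrow> nat \<Rightarrow> nat \<times> nat" where
  "tree_child v s = (fst v + 1, 2 * snd v + s)"

definition path_extend :: "(nat \<times> nat) list \<Rightarrow> nat \<Rightarrow> (nat \<times> nat) list" where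
  "path_extend p s = p @ [tree_child (last p) s]"

lemma tree_child_eq_iff:
  assumes "s \<in> {0, 1}" and "t \<in> {0, 1}"
  shows "tree_child v s = tree_child w t \<longleftrightarrow> v = w \<and> s = t"
  using assms by (cases v; cases w) (auto simp: tree_child_def; presburger)

lemma tree_paths_iff:
  "p \<in> tree_paths m \<longleftrightarrow> length p = m \<and> p \<noteq> [] \<and> p ! 0 = (0, 0) \<and>
     (\<forall>k. k + 1 < m \<longrightarrow> (\<exists>s\<in>{0, 1}. p ! (k + 1) = tree_child (p ! k) s))"
  by (auto simp: tree_paths_def tree_child_def hd_conv_nth)

lemma tree_paths_length: "p \<in> tree_paths m \<Longrightarrow> length p = m"
  by (simp add: tree_paths_iff)

lemma tree_paths_nth:
  assumes "p \<in> tree_paths m" and "k < m"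
  shows "fst (p ! k) = k \<and> snd (p ! k) < 2 ^ k"
  using assms(2)
proof (induction k)
  case 0
  then show ?case using assms(1) by (simp add: tree_paths_iff)
next
  case (Suc k)
  then obtain s where "s \<in> {0, 1}" and "p ! Suc k = tree_child (p ! k) s"
    using assms(1) by (auto simp: tree_paths_iff)
  with Suc show ?case by (auto simp: tree_child_def)
qed

lemma tree_path_vertex_bounds:
  assumes "p \<in> tree_paths m" and "v \<in> set p"
  shows "fst v < m \<and> snd v < 2 ^ fst v"
proof -
  obtain k where "k < m" and "v = p ! k"
    using assms by (auto simp: in_set_conv_nth tree_paths_length)
  then show ?thesis using tree_paths_nth[OF assms(1)] by simp
qed

lemma tree_path_subset: "p \<in> tree_paths m \<Longrightarrow> set p \<subseteq> tree_V_all"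
  by (auto simp: tree_V_all_def dest: tree_path_vertex_bounds)

lemma map_fst_tree_path: "p \<in> tree_paths m \<Longrightarrow> map fst p = [0..<m]"
  by (simp add: list_eq_iff_nth_eq tree_paths_length tree_paths_nth)

lemma card_set_tree_path: "p \<in> tree_paths m \<Longrightarrow> card (set p) = m"
  using distinct_map[of fst p] by (simp add: map_fst_tree_path distinct_card tree_paths_length)

lemma level_last_tree_path: "p \<in> tree_paths (Suc n) \<Longrightarrow> fst (last p) = n"
  using tree_paths_nth[of p "Suc n" n] by (auto simp: last_conv_nth tree_paths_iff)

lemma snoc_in_tree_paths_iff:
  assumes "p \<noteq> []"
  shows "p @ [u] \<in> tree_paths (Suc m) \<longleftrightarrow>
    p \<in> tree_paths m \<and> (\<exists>s\<in>{0, 1}. u = tree_child (last p) s)"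
proof (cases "length p = m")
  case True
  then obtain n where m: "m = Suc n" and "last p = p ! n"
    using assms by (cases m) (auto simp: last_conv_nth)
  moreover have "(\<forall>k. k + 1 < Suc m \<longrightarrow> P k) \<longleftrightarrow> (\<forall>k. k + 1 < m \<longrightarrow> P k) \<and> P n" for P
    using m by (auto simp: less_Suc_eq)
  ultimately show ?thesis
    using True assms by (simp add: tree_paths_iff nth_append cong: imp_cong)
qed (simp add: tree_paths_iff)

lemma tree_paths_zero: "tree_paths 0 = {}"
  by (auto simp: tree_paths_iff)

lemma tree_paths_one: "tree_paths (Suc 0) = {[(0, 0)]}"
  by (auto simp: tree_paths_iff length_Suc_conv)

lemma tree_paths_Suc_Suc:
  "tree_paths (Suc (Suc n)) = (\<lambda>(p, s). path_extend p s) ` (tree_paths (Suc n) \<times> {0, 1})"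
proof (intro equalityI subsetI)
  fix q assume q: "q \<in> tree_paths (Suc (Suc n))"
  then have "butlast q \<noteq> []" and q_eq: "q = butlast q @ [last q]"
    by (auto simp: tree_paths_iff length_Suc_conv)
  with q obtain s where "butlast q \<in> tree_paths (Suc n)" "s \<in> {0, 1}"
      "last q = tree_child (last (butlast q)) s"
    by (metis snoc_in_tree_paths_iff)
  then show "q \<in> (\<lambda>(p, s). path_extend p s) ` (tree_paths (Suc n) \<times> {0, 1})"
    using q_eq by (force simp: path_extend_def)
next
  fix q assume "q \<in> (\<lambda>(p, s). path_extend p s) ` (tree_paths (Suc n) \<times> {0, 1})"
  then obtain p s where "p \<in> tree_paths (Suc n)" "s \<in> {0, 1}" "q = path_extend p s"
    by auto
  moreover from this(1) have "p \<noteq> []"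
    by (simp add: tree_paths_iff)
  ultimately show "q \<in> tree_paths (Suc (Suc n))"
    by (auto simp: path_extend_def snoc_in_tree_paths_iff)
qed

lemma inj_on_path_extend: "inj_on (\<lambda>(p, s). path_extend p s) (A \<times> {0, 1})"
  by (auto intro!: inj_onI simp: path_extend_def tree_child_eq_iff)

lemma finite_tree_paths: "finite (tree_paths m)"
proof (cases m)
  case 0
  then show ?thesis by (simp add: tree_paths_zero)
next
  case (Suc n)
  then show ?thesis
    by (induction n arbitrary: m) (simp_all add: tree_paths_one tree_paths_Suc_Suc)
qed

lemma card_tree_paths: "card (tree_paths (Suc n)) = 2 ^ n"
proof (induction n)
  case 0
  then show ?case by (simp add: tree_paths_one)
next
  case (Suc n)
  have "card (tree_paths (Suc (Suc n))) = card (tree_paths (Suc n) \<times> {0::nat, 1})"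
    unfolding tree_paths_Suc_Suc by (rule card_image[OF inj_on_path_extend])
  with Suc.IH show ?case by (simp add: card_cartesian_product)
qed

lemma tree_path_eqI_last:
  assumes "p \<in> tree_paths m" and "q \<in> tree_paths m" and "last p = last q"
  shows "p = q"
proof (cases m)
  case 0
  then show ?thesis using assms by (simp add: tree_paths_iff)
next
  case (Suc n)
  then show ?thesis using assms
  proof (induction n arbitrary: m p q)
    case 0
    then show ?case by (simp add: tree_paths_one)
  next
    case (Suc n)
    obtain p' s q' t where "p' \<in> tree_paths (Suc n)" "q' \<in> tree_paths (Suc n)" "s \<in> {0, 1}"
      "t \<in> {0, 1}" "p = path_extend p' s" "q = path_extend q' t"
      using Suc.prems by (auto simp: tree_paths_Suc_Suc)
    with Suc.IH Suc.prems(4) show ?case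
      by (auto simp: path_extend_def tree_child_eq_iff)
  qed
qed

lemma card_Int_path_extend:
  assumes p: "p \<in> tree_paths (Suc n)" and q: "q \<in> tree_paths (Suc n)"
    and "s \<in> {0, 1}" and "t \<in> {0, 1}"
  shows "card (set (path_extend p s) \<inter> set (path_extend q t)) =
    card (set p \<inter> set q) + of_bool (p = q \<and> s = t)"
proof -
  define u w where "u = tree_child (last p) s" and "w = tree_child (last q) t"
  have "fst u = Suc n" and "fst w = Suc n"
    using level_last_tree_path[OF p] level_last_tree_path[OF q]
    by (simp_all add: u_def w_def tree_child_def)
  then have new: "u \<notin> set p" "u \<notin> set q" "w \<notin> set p"
    using tree_path_vertex_bounds[OF p] tree_path_vertex_bounds[OF q] by (metis less_irrefl)+
  have "u = w \<longleftrightarrow> p = q \<and> s = t"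
    using assms tree_path_eqI_last[OF p q] by (auto simp: u_def w_def tree_child_eq_iff)
  then show ?thesis
    using new by (cases "u = w") (auto simp: path_extend_def u_def[symmetric] w_def[symmetric]
      Int_insert_left Int_insert_right)
qed

section \<open>Overlap sums\<close>

definition path_overlap_sum :: "real \<Rightarrow> nat \<Rightarrow> real" where
  "path_overlap_sum a m = (\<Sum>p\<in>tree_paths m. \<Sum>q\<in>tree_paths m. a ^ card (set p \<inter> set q))"

lemma path_overlap_sum_Suc_Suc:
  "path_overlap_sum a (Suc (Suc n)) / 4 ^ Suc n =
    path_overlap_sum a (Suc n) / 4 ^ n + (a - 1) * (a / 2) ^ Suc n"
proof -
  let ?P = "tree_paths (Suc n)" and ?B = "{0::nat, 1}"
  let ?ov = "\<lambda>p q. a ^ card (set p \<inter> set q)"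
  have "path_overlap_sum a (Suc (Suc n)) =
      (\<Sum>(p, s)\<in>?P \<times> ?B. \<Sum>(q, t)\<in>?P \<times> ?B. ?ov (path_extend p s) (path_extend q t))"
    unfolding path_overlap_sum_def tree_paths_Suc_Suc sum.reindex[OF inj_on_path_extend]
    by (simp add: case_prod_unfold)
  also have "\<dots> = (\<Sum>p\<in>?P. \<Sum>s\<in>?B. \<Sum>q\<in>?P. \<Sum>t\<in>?B. ?ov p q * a ^ of_bool (p = q \<and> s = t))"
    by (simp add: sum.cartesian_product' card_Int_path_extend power_add)
  also have "\<dots> = (\<Sum>p\<in>?P. \<Sum>q\<in>?P. ?ov p q * (\<Sum>s\<in>?B. \<Sum>t\<in>?B. a ^ of_bool (p = q \<and> s = t)))"
    by (intro sum.cong refl, subst sum.swap) (simp only: sum_distrib_left)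
  also have "\<dots> = (\<Sum>p\<in>?P. \<Sum>q\<in>?P. 4 * ?ov p q + (if p = q then ?ov p q * (2 * a - 2) else 0))"
    by (intro sum.cong refl) (auto simp: algebra_simps)
  also have "\<dots> = 4 * path_overlap_sum a (Suc n) + (\<Sum>p\<in>?P. ?ov p p * (2 * a - 2))"
    by (simp add: path_overlap_sum_def sum.distrib sum_distrib_left finite_tree_paths)
  also have "\<dots> = 4 * path_overlap_sum a (Suc n) + 2 ^ n * a ^ Suc n * (2 * a - 2)"
    by (simp add: card_set_tree_path card_tree_paths)
  also have "2 ^ n * a ^ Suc n * (2 * a - 2) = 4 ^ Suc n * ((a - 1) * (a / 2) ^ Suc n)"
  proof -
    have "(4::real) ^ Suc n = 2 ^ Suc n * 2 ^ Suc n"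
      by (simp flip: power_mult_distrib)
    then show ?thesis by (simp add: power_divide)
  qed
  finally show ?thesis by (simp add: field_simps)
qed

lemma path_overlap_sum_eq:
  "path_overlap_sum a (Suc n) / 4 ^ n = 1 + (a - 1) * (\<Sum>k<Suc n. (a / 2) ^ k)"
proof (induction n)
  case 0
  show ?case by (simp add: path_overlap_sum_def tree_paths_one)
next
  case (Suc n)
  show ?case
    unfolding path_overlap_sum_Suc_Suc Suc.IH by (simp add: distrib_left)
qed

section \<open>Moments of the likelihood ratio\<close>

lemma sum_add_sum_eq_sum_Un:
  fixes f :: "'a \<Rightarrow> 'b::comm_semiring_1"
  assumes "finite A" and "finite B"
  shows "sum f A + sum f B = (\<Sum>v\<in>A \<union> B. (of_bool (v \<in> A) + of_bool (v \<in> B)) * f v)"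
  using assms by (simp add: distrib_right sum.distrib)

lemma sum_Un_of_bool_add_square:
  assumes "finite A" and "finite B"
  shows "(\<Sum>v\<in>A \<union> B. (of_bool (v \<in> A) + of_bool (v \<in> B))\<^sup>2) =
    (of_nat (card A + card B + 2 * card (A \<inter> B)) :: 'b::comm_semiring_1)"
proof -
  have "(\<Sum>v\<in>A \<union> B. (of_bool (v \<in> A) + of_bool (v \<in> B))\<^sup>2) =
      (\<Sum>v\<in>A. of_bool (v \<in> A) + of_bool (v \<in> B)) + (\<Sum>v\<in>B. of_bool (v \<in> A) + of_bool (v \<in> B) :: 'b)"
    unfolding power2_eq_square by (rule sum_add_sum_eq_sum_Un[OF assms, symmetric])
  also have "\<dots> = of_nat (card A + card B + 2 * card (A \<inter> B))"
    using assms by (simp add: sum.distrib Int_commute mult_2 ac_simps)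
  finally show ?thesis .
qed

lemma std_normal_density_mult_exp:
  "std_normal_density x * exp (t * x) = exp (t\<^sup>2 / 2) * normal_density t 1 x"
proof -
  have "exp (- x\<^sup>2 / 2) * exp (t * x) = exp (t\<^sup>2 / 2) * exp (- (x - t)\<^sup>2 / 2)"
    by (simp add: mult_exp_exp power2_eq_square field_simps)
  then show ?thesis by (simp add: std_normal_density_def normal_density_def)
qed

lemma (in prob_space) std_normal_mgf:
  assumes "distributed M lborel Y std_normal_density"
  shows "integrable M (\<lambda>\<omega>. exp (t * Y \<omega>))"
    and "expectation (\<lambda>\<omega>. exp (t * Y \<omega>)) = exp (t\<^sup>2 / 2)"
proof -
  have exp_measurable: "(\<lambda>x. exp (t * x)) \<in> borel_measurable lborel" by measurable
  show "integrable M (\<lambda>\<omega>. exp (t * Y \<omega>))"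
    using distributed_integrable[OF assms exp_measurable] by (simp add: std_normal_density_mult_exp)
  show "expectation (\<lambda>\<omega>. exp (t * Y \<omega>)) = exp (t\<^sup>2 / 2)"
    using distributed_integral[OF assms exp_measurable] by (simp add: std_normal_density_mult_exp)
qed

lemma (in prob_space) indep_std_normal_mgf:
  assumes indep: "indep_vars (\<lambda>_. borel) X I"
    and std_normal: "\<forall>v\<in>I. distributed M lborel (X v) std_normal_density"
    and S: "finite S" "S \<subseteq> I"
  shows "integrable M (\<lambda>\<omega>. exp (\<Sum>v\<in>S. c v * X v \<omega>))"
    and "expectation (\<lambda>\<omega>. exp (\<Sum>v\<in>S. c v * X v \<omega>)) = exp (\<Sum>v\<in>S. (c v)\<^sup>2 / 2)"
proof -
  have exp_sum: "exp (\<Sum>v\<in>S. g v) = (\<Prod>v\<in>S. exp (g v))" for g :: "_ \<Rightarrow> real"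
    using S(1) by (rule exp_sum)
  have indep_exp: "indep_vars (\<lambda>_. borel) (\<lambda>v \<omega>. exp (c v * X v \<omega>)) S"
    using indep_vars_compose2[OF indep_vars_subset[OF indep S(2)], of "\<lambda>v x. exp (c v * x)"]
    by simp
  have factor: "integrable M (\<lambda>\<omega>. exp (c v * X v \<omega>))"
    "expectation (\<lambda>\<omega>. exp (c v * X v \<omega>)) = exp ((c v)\<^sup>2 / 2)" if "v \<in> S" for v
    using std_normal_mgf std_normal that S(2) by blast+
  show "integrable M (\<lambda>\<omega>. exp (\<Sum>v\<in>S. c v * X v \<omega>))"
    unfolding exp_sum by (rule indep_vars_integrable[OF S(1) indep_exp factor(1)])
  have "expectation (\<lambda>\<omega>. \<Prod>v\<in>S. exp (c v * X v \<omega>)) =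
      (\<Prod>v\<in>S. expectation (\<lambda>\<omega>. exp (c v * X v \<omega>)))"
    by (rule indep_vars_lebesgue_integral[OF S(1) indep_exp factor(1)])
  also have "\<dots> = (\<Prod>v\<in>S. exp ((c v)\<^sup>2 / 2))"
    by (rule prod.cong) (simp_all add: factor(2))
  finally show "expectation (\<lambda>\<omega>. exp (\<Sum>v\<in>S. c v * X v \<omega>)) = exp (\<Sum>v\<in>S. (c v)\<^sup>2 / 2)"
    unfolding exp_sum .
qed

definition path_weight ::
    "real \<Rightarrow> nat \<Rightarrow> (nat \<times> nat \<Rightarrow> 'a \<Rightarrow> real) \<Rightarrow> (nat \<times> nat) list \<Rightarrow> 'a \<Rightarrow> real" where
  "path_weight \<mu> m X p \<omega> = exp (\<mu> * path_sum X p \<omega> - real m * \<mu>\<^sup>2 / 2)"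

context prob_space
begin

context
  fixes X :: "nat \<times> nat \<Rightarrow> 'a \<Rightarrow> real"
  assumes indep: "indep_vars (\<lambda>_. borel) X tree_V_all"
    and std_normal: "\<forall>v\<in>tree_V_all. distributed M lborel (X v) std_normal_density"
begin

lemma expectation_path_weight:
  assumes p: "p \<in> tree_paths m"
  shows "integrable M (path_weight \<mu> m X p)" and "expectation (path_weight \<mu> m X p) = 1"
proof -
  have weight: "path_weight \<mu> m X p =
      (\<lambda>\<omega>. exp (- (real m * \<mu>\<^sup>2 / 2)) * exp (\<Sum>v\<in>set p. \<mu> * X v \<omega>))"
    by (simp add: fun_eq_iff path_weight_def path_sum_def sum_distrib_left flip: exp_add)
  note mgf = indep_std_normal_mgf[OF indep std_normal finite_set tree_path_subset[OF p], of "\<lambda>_. \<mu>"]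
  show "integrable M (path_weight \<mu> m X p)"
    unfolding weight using mgf(1) by simp
  show "expectation (path_weight \<mu> m X p) = 1"
    unfolding weight using mgf(2) by (simp add: card_set_tree_path[OF p] exp_minus)
qed

lemma expectation_path_weight_mult:
  assumes p: "p \<in> tree_paths m" and q: "q \<in> tree_paths m"
  shows "integrable M (\<lambda>\<omega>. path_weight \<mu> m X p \<omega> * path_weight \<mu> m X q \<omega>)"
    and "expectation (\<lambda>\<omega>. path_weight \<mu> m X p \<omega> * path_weight \<mu> m X q \<omega>) =
      exp (\<mu>\<^sup>2) ^ card (set p \<inter> set q)"
proof -
  define c where "c v = \<mu> * (of_bool (v \<in> set p) + of_bool (v \<in> set q))" for v
  have weight: "(\<lambda>\<omega>. path_weight \<mu> m X p \<omega> * path_weight \<mu> m X q \<omega>) =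
      (\<lambda>\<omega>. exp (- (real m * \<mu>\<^sup>2)) * exp (\<Sum>v\<in>set p \<union> set q. c v * X v \<omega>))"
  proof
    fix \<omega>
    have "(\<Sum>v\<in>set p \<union> set q. c v * X v \<omega>) =
        \<mu> * (\<Sum>v\<in>set p \<union> set q. (of_bool (v \<in> set p) + of_bool (v \<in> set q)) * X v \<omega>)"
      by (simp add: c_def sum_distrib_left mult.assoc)
    also have "\<dots> = \<mu> * path_sum X p \<omega> + \<mu> * path_sum X q \<omega>"
      unfolding path_sum_def distrib_left[symmetric] sum_add_sum_eq_sum_Un[OF finite_set finite_set] ..
    finally show "path_weight \<mu> m X p \<omega> * path_weight \<mu> m X q \<omega> =
        exp (- (real m * \<mu>\<^sup>2)) * exp (\<Sum>v\<in>set p \<union> set q. c v * X v \<omega>)"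
      by (simp add: path_weight_def field_simps flip: exp_add)
  qed
  have "(\<Sum>v\<in>set p \<union> set q. (c v)\<^sup>2 / 2) = real m * \<mu>\<^sup>2 + card (set p \<inter> set q) * \<mu>\<^sup>2"
    using sum_Un_of_bool_add_square[of "set p" "set q", where 'b = real]
    by (simp add: c_def power_mult_distrib card_set_tree_path[OF p] card_set_tree_path[OF q]
        flip: sum_divide_distrib sum_distrib_left) (simp add: algebra_simps)
  moreover have "set p \<union> set q \<subseteq> tree_V_all"
    using tree_path_subset[OF p] tree_path_subset[OF q] by simp
  note mgf = indep_std_normal_mgf[OF indep std_normal finite_UnI[OF finite_set finite_set] this, of c]
  show "integrable M (\<lambda>\<omega>. path_weight \<mu> m X p \<omega> * path_weight \<mu> m X q \<omega>)"
    unfolding weight using mgf(1) by simp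
  show "expectation (\<lambda>\<omega>. path_weight \<mu> m X p \<omega> * path_weight \<mu> m X q \<omega>) =
      exp (\<mu>\<^sup>2) ^ card (set p \<inter> set q)"
    unfolding weight integral_mult_right_zero mgf(2) calculation
    by (simp add: mult_exp_exp flip: exp_of_nat_mult)
qed

lemma variance_LR:
  "variance (LR \<mu> m X) = (exp (\<mu>\<^sup>2) - 1) * (\<Sum>k<m. (exp (\<mu>\<^sup>2) / 2) ^ k)"
proof (cases m)
  case 0
  then have "LR \<mu> m X = (\<lambda>_. 0)"
    by (simp add: fun_eq_iff LR_def tree_paths_zero)
  then show ?thesis by (simp add: \<open>m = 0\<close>)
next
  case (Suc n)
  let ?P = "tree_paths m" and ?W = "path_weight \<mu> m X"
  have LR: "LR \<mu> m X = (\<lambda>\<omega>. (\<Sum>p\<in>?P. ?W p \<omega>) / 2 ^ n)"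
    by (simp add: fun_eq_iff LR_def path_weight_def Suc)
  have four: "(2::real) ^ n * 2 ^ n = 4 ^ n"
    by (simp flip: power_mult_distrib)
  have LR_square: "(\<lambda>\<omega>. (LR \<mu> m X \<omega>)\<^sup>2) = (\<lambda>\<omega>. (\<Sum>p\<in>?P. \<Sum>q\<in>?P. ?W p \<omega> * ?W q \<omega>) / 4 ^ n)"
    unfolding LR power2_eq_square times_divide_times_eq sum_product four ..
  have card: "card ?P = 2 ^ n"
    by (simp add: Suc card_tree_paths)
  have integrable: "integrable M (LR \<mu> m X)"
    unfolding LR by (simp add: expectation_path_weight(1))
  have integrable_square: "integrable M (\<lambda>\<omega>. (LR \<mu> m X \<omega>)\<^sup>2)"
    unfolding LR_square by (simp add: expectation_path_weight_mult(1))
  have "expectation (LR \<mu> m X) = 1"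
    unfolding LR using expectation_path_weight card by simp
  moreover have "expectation (\<lambda>\<omega>. (LR \<mu> m X \<omega>)\<^sup>2) =
      1 + (exp (\<mu>\<^sup>2) - 1) * (\<Sum>k<m. (exp (\<mu>\<^sup>2) / 2) ^ k)"
  proof -
    have "expectation (\<lambda>\<omega>. (LR \<mu> m X \<omega>)\<^sup>2) = path_overlap_sum (exp (\<mu>\<^sup>2)) (Suc n) / 4 ^ n"
      unfolding LR_square using expectation_path_weight_mult by (simp add: path_overlap_sum_def Suc)
    then show ?thesis by (simp add: path_overlap_sum_eq Suc)
  qed
  ultimately show ?thesis
    using variance_eq[OF integrable integrable_square] by simp
qed

end

end

section \<open>The limit\<close>

lemma sum_geometric_le:
  fixes x :: real
  assumes "0 \<le> x" and "x < 1"
  shows "(\<Sum>k<m. x ^ k) \<le> 1 / (1 - x)"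
proof -
  have "(\<Sum>k<m. x ^ k) = (1 - x ^ m) / (1 - x)"
    using assms by (simp add: sum_gp_strict)
  also have "\<dots> \<le> 1 / (1 - x)"
    using assms by (intro divide_right_mono) auto
  finally show ?thesis .
qed

lemma tendsto_diff_one_mult_geometric_sum:
  fixes a :: "nat \<Rightarrow> real"
  assumes "a \<longlonglongrightarrow> 1"
  shows "(\<lambda>m. (a m - 1) * (\<Sum>k<m. (a m / 2) ^ k)) \<longlonglongrightarrow> 0"
proof (rule Lim_null_comparison)
  have "eventually (\<lambda>m. 0 < a m \<and> a m < 2) sequentially"
    using order_tendstoD(1)[OF assms, of 0] order_tendstoD(2)[OF assms, of 2]
    by (simp add: eventually_conj_iff)
  then show "eventually (\<lambda>m. norm ((a m - 1) * (\<Sum>k<m. (a m / 2) ^ k)) \<le>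
      \<bar>a m - 1\<bar> / (1 - a m / 2)) sequentially"
  proof eventually_elim
    case (elim m)
    have "0 \<le> (\<Sum>k<m. (a m / 2) ^ k)"
      using elim by (intro sum_nonneg) simp
    then have "norm ((a m - 1) * (\<Sum>k<m. (a m / 2) ^ k)) = \<bar>a m - 1\<bar> * (\<Sum>k<m. (a m / 2) ^ k)"
      by (simp add: abs_mult)
    also have "\<dots> \<le> \<bar>a m - 1\<bar> * (1 / (1 - a m / 2))"
      using elim by (intro mult_left_mono sum_geometric_le) simp_all
    finally show ?case by simp
  qed
  have "(\<lambda>m. \<bar>a m - 1\<bar> / (1 - a m / 2)) \<longlonglongrightarrow> \<bar>1 - 1\<bar> / (1 - 1 / 2)"
    by (intro tendsto_intros assms) simp_all
  then show "(\<lambda>m. \<bar>a m - 1\<bar> / (1 - a m / 2)) \<longlonglongrightarrow> 0"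
    by simp
qed

theorem mainTheorem12:
  fixes M :: "'a measure" and X :: "nat \<times> nat \<Rightarrow> 'a \<Rightarrow> real"
  assumes "prob_space M"
    and "prob_space.indep_vars M (\<lambda>_. borel) X tree_V_all"
    and "\<forall>v\<in>tree_V_all. distributed M lborel (X v) std_normal_density"
  shows "(\<forall>(\<mu>::real) (m::nat). m \<ge> 1 \<longrightarrow> exp (\<mu>\<^sup>2) / 2 \<noteq> 1 \<longrightarrow>
            prob_space.variance M (LR \<mu> m X) =
              (2 * (exp (\<mu>\<^sup>2) / 2) - 1) * (1 - (exp (\<mu>\<^sup>2) / 2) ^ m) / (1 - exp (\<mu>\<^sup>2) / 2))
       \<and> (\<forall>\<mu> :: nat \<Rightarrow> real. \<mu> \<longlonglongrightarrow> 0 \<longrightarrow>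
            (\<lambda>m. prob_space.variance M (LR (\<mu> m) m X)) \<longlonglongrightarrow> 0)"
proof -
  note variance = prob_space.variance_LR[OF assms]
  show ?thesis
  proof (intro conjI allI impI)
    fix \<mu> :: real and m :: nat
    assume "exp (\<mu>\<^sup>2) / 2 \<noteq> 1"
    then show "prob_space.variance M (LR \<mu> m X) =
        (2 * (exp (\<mu>\<^sup>2) / 2) - 1) * (1 - (exp (\<mu>\<^sup>2) / 2) ^ m) / (1 - exp (\<mu>\<^sup>2) / 2)"
      by (simp add: variance sum_gp_strict)
  next
    fix \<mu> :: "nat \<Rightarrow> real"
    assume "\<mu> \<longlonglongrightarrow> 0"
    then have "(\<lambda>m. exp ((\<mu> m)\<^sup>2)) \<longlonglongrightarrow> exp (0\<^sup>2)"
      by (intro tendsto_intros)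
    then have "(\<lambda>m. exp ((\<mu> m)\<^sup>2)) \<longlonglongrightarrow> 1"
      by simp
    then show "(\<lambda>m. prob_space.variance M (LR (\<mu> m) m X)) \<longlonglongrightarrow> 0"
      unfolding variance by (rule tendsto_diff_one_mult_geometric_sum)
  qed
qed

end
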